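(* Let $W$ be an entanglement witness on $\mathbb{C}^m\otimes\mathbb{C}^n$ and set $W_t:=tW+(1-t)W^*$ for $t\in[0,1]$. (i) For every $t\in[0,1]$, $W_t$ is an entanglement witness if and only if $W_t$ is not positive semidefinite. (ii) For a given $t\in[0,1]$, $W_t$ is an entanglement witness if and only if there is a state $\rho$ such that $W$ detects $\rho_t:=t\rho+(1-t)\rho^*$, i.e. $\mathrm{tr}(W\rho_t)<0$.
   Context: An entanglement witness on $\mathbb{C}^m\otimes\mathbb{C}^n$ is a Hermitian matrix $W$ with $\mathrm{tr}(W\sigma)\ge0$ for all separable states $\sigma$ and $\mathrm{tr}(W\sigma)<0$ for at least one entangled state; $W$ detects $\rho$ if $\mathrm{tr}(W\rho)<0$. $M^*$ denotes the entrywise complex conjugate. *)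

theory Defs
  imports "HOL-Analysis.Analysis"
begin

text \<open>Matrices on C^m (x) C^n are complex matrices indexed by the finite type 'm \<times> 'n.\<close>

definition conj_mat :: "complex^'n^'k \<Rightarrow> complex^'n^'k" where
  "conj_mat M = (\<chi> i j. cnj (M $ i $ j))"

definition adjoint_mat :: "complex^'n^'n \<Rightarrow> complex^'n^'n" where
  "adjoint_mat M = (\<chi> i j. cnj (M $ j $ i))"

definition hermitian :: "complex^'n^'n \<Rightarrow> bool" where
  "hermitian M \<longleftrightarrow> adjoint_mat M = M"

definition quad_form :: "complex^'n^'n \<Rightarrow> complex^'n \<Rightarrow> complex" where
  "quad_form M v = (\<Sum>i\<in>UNIV. \<Sum>j\<in>UNIV. cnj (v $ i) * M $ i $ j * v $ j)"

definition psd :: "complex^'n^'n \<Rightarrow> bool" where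
  "psd M \<longleftrightarrow> hermitian M \<and> (\<forall>v. Im (quad_form M v) = 0 \<and> Re (quad_form M v) \<ge> 0)"

definition is_state :: "complex^'n^'n \<Rightarrow> bool" where
  "is_state \<rho> \<longleftrightarrow> psd \<rho> \<and> trace \<rho> = 1"

definition kron :: "complex^'m^'m \<Rightarrow> complex^'n^'n \<Rightarrow> complex^('m \<times> 'n)^('m \<times> 'n)" where
  "kron A B = (\<chi> p q. A $ fst p $ fst q * B $ snd p $ snd q)"

definition separable :: "complex^('m::finite \<times> 'n::finite)^('m \<times> 'n) \<Rightarrow> bool" where
  "separable \<sigma> \<longleftrightarrow> (\<exists>(k::nat) (p::nat \<Rightarrow> real) (A::nat \<Rightarrow> complex^'m^'m) (B::nat \<Rightarrow> complex^'n^'n).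
      (\<forall>i<k. p i \<ge> 0 \<and> is_state (A i) \<and> is_state (B i)) \<and> (\<Sum>i<k. p i) = 1 \<and>
      \<sigma> = (\<Sum>i<k. p i *\<^sub>R kron (A i) (B i)))"

definition entangled :: "complex^('m::finite \<times> 'n::finite)^('m \<times> 'n) \<Rightarrow> bool" where
  "entangled \<rho> \<longleftrightarrow> is_state \<rho> \<and> \<not> separable \<rho>"

text \<open>tr(W rho) is real for Hermitian W, rho; the conditions below state realness and sign explicitly.\<close>

definition detects :: "complex^'n^'n \<Rightarrow> complex^'n^'n \<Rightarrow> bool" where
  "detects W \<rho> \<longleftrightarrow> Im (trace (W ** \<rho>)) = 0 \<and> Re (trace (W ** \<rho>)) < 0"

definition entanglement_witness :: "complex^('m::finite \<times> 'n::finite)^('m \<times> 'n) \<Rightarrow> bool" where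
  "entanglement_witness W \<longleftrightarrow> hermitian W \<and>
     (\<forall>\<sigma>. separable \<sigma> \<longrightarrow> Im (trace (W ** \<sigma>)) = 0 \<and> Re (trace (W ** \<sigma>)) \<ge> 0) \<and>
     (\<exists>\<rho>. entangled \<rho> \<and> detects W \<rho>)"

definition mix :: "real \<Rightarrow> complex^'n^'n \<Rightarrow> complex^'n^'n" where
  "mix t M = t *\<^sub>R M + (1 - t) *\<^sub>R conj_mat M"

end

theory Submission
  imports Defs
begin

text \<open>The mixture W_t = t W + (1 - t) W* is Hermitian, and for t in [0,1] it is nonnegative
  on separable states, because entrywise conjugation preserves separability and tr(W* \<sigma>) is
  the conjugate of tr(W \<sigma>*). Hence W_t is a witness as soon as it detects some state, and a
  Hermitian M detects some state iff M is not positive semidefinite: a negative direction v of M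
  yields the detected pure state v v^H / |v|^2, while tr(A B) \<ge> 0 for positive semidefinite A and
  B since B is a sum of rank-one matrices u u^H (Cholesky elimination, each pivot step kept
  positive semidefinite by Cauchy--Schwarz for B). Part (ii) follows from
  tr(W \<rho>_t) = tr(W_t \<rho>) for Hermitian W and \<rho>, which holds because this pairing is real.\<close>

lemma hermitian_entry: "hermitian M \<Longrightarrow> cnj (M $ j $ i) = M $ i $ j"
  unfolding hermitian_def adjoint_mat_def by (metis vec_lambda_beta)

lemma hermitianI: "(\<And>i j. cnj (M $ j $ i) = M $ i $ j) \<Longrightarrow> hermitian M"
  unfolding hermitian_def adjoint_mat_def by (simp add: vec_eq_iff)

lemma hermitian_diff: "hermitian A \<Longrightarrow> hermitian B \<Longrightarrow> hermitian (A - B)"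
  by (rule hermitianI) (simp add: hermitian_entry)

lemma hermitian_diag_real: "hermitian M \<Longrightarrow> M $ k $ k = of_real (Re (M $ k $ k))"
  by (metis Reals_cnj_iff complex_is_Real_iff hermitian_entry of_real_Re)

lemma Im_eq_0_if_cnj_eq: "cnj z = z \<Longrightarrow> Im z = 0"
  by (metis Reals_cnj_iff complex_is_Real_iff)

lemma cnj_quad_form_hermitian:
  assumes "hermitian M"
  shows "cnj (quad_form M v) = quad_form M v"
proof -
  have "cnj (quad_form M v) = (\<Sum>i\<in>UNIV. \<Sum>j\<in>UNIV. cnj (v $ j) * M $ j $ i * v $ i)"
    unfolding quad_form_def using hermitian_entry[OF assms] by (simp add: mult_ac)
  also have "\<dots> = quad_form M v"
    unfolding quad_form_def by (rule sum.swap)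
  finally show ?thesis .
qed

lemma Im_quad_form_hermitian: "hermitian M \<Longrightarrow> Im (quad_form M v) = 0"
  by (rule Im_eq_0_if_cnj_eq) (rule cnj_quad_form_hermitian)

lemma trace_matrix_mult: "trace (A ** B) = (\<Sum>i\<in>UNIV. \<Sum>j\<in>UNIV. A $ i $ j * B $ j $ i)"
  unfolding trace_def matrix_matrix_mult_def by simp

lemma Im_trace_mult_hermitian:
  assumes "hermitian A" "hermitian B"
  shows "Im (trace (A ** B)) = 0"
proof (rule Im_eq_0_if_cnj_eq)
  have "cnj (trace (A ** B)) = trace (B ** A)"
    unfolding trace_matrix_mult using hermitian_entry[OF assms(1)] hermitian_entry[OF assms(2)]
    by (simp add: mult.commute)
  then show "cnj (trace (A ** B)) = trace (A ** B)"
    by (metis trace_mul_sym)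
qed

lemma quad_form_axis: "quad_form M (axis k 1) = M $ k $ k"
  unfolding quad_form_def axis_def by (simp add: if_distrib if_distribR sum.If_cases)

lemma quad_form_add:
  "quad_form M (v + w) = quad_form M v + (\<Sum>i\<in>UNIV. \<Sum>j\<in>UNIV. cnj (v $ i) * M $ i $ j * w $ j)
     + (\<Sum>i\<in>UNIV. \<Sum>j\<in>UNIV. cnj (w $ i) * M $ i $ j * v $ j) + quad_form M w"
  unfolding quad_form_def by (simp add: algebra_simps sum.distrib)

lemma quad_form_add_axis:
  "quad_form M (v + axis k s) = quad_form M v + s * (\<Sum>i\<in>UNIV. cnj (v $ i) * M $ i $ k)
     + cnj s * (\<Sum>j\<in>UNIV. M $ k $ j * v $ j) + cnj s * s * M $ k $ k"
  unfolding quad_form_add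
  by (simp add: quad_form_def axis_def if_distrib if_distribR sum.If_cases sum_distrib_left mult_ac)

lemma quad_form_diff: "quad_form (A - B) v = quad_form A v - quad_form B v"
  unfolding quad_form_def by (simp add: algebra_simps sum_subtractf)

lemma quad_form_scaleR: "quad_form M (r *\<^sub>R v) = of_real (r\<^sup>2) * quad_form M v"
  unfolding quad_form_def vector_scaleR_component
  by (simp add: scaleR_conv_of_real sum_distrib_left power2_eq_square mult_ac)

lemma nonneg_quadratic_discriminant:
  fixes a b c :: real
  assumes "0 \<le> a" and nonneg: "\<And>x. 0 \<le> a * x\<^sup>2 + b * x + c"
  shows "b\<^sup>2 \<le> 4 * a * c"
proof (cases "a = 0")
  case True
  have "b = 0"
  proof (rule ccontr)
    assume "b \<noteq> 0"
    then show False using nonneg[of "- (c + 1) / b"] True by simp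
  qed
  with True show ?thesis by simp
next
  case False
  with assms(1) have "0 < a" by simp
  have "0 \<le> a * (- b / (2 * a))\<^sup>2 + b * (- b / (2 * a)) + c" by (rule nonneg)
  also have "\<dots> = (4 * a * c - b\<^sup>2) / (4 * a)"
    using \<open>0 < a\<close> by (simp add: field_simps power2_eq_square)
  finally show ?thesis using \<open>0 < a\<close> by (simp add: zero_le_divide_iff)
qed

lemma psd_diag_nonneg: "psd M \<Longrightarrow> 0 \<le> Re (M $ k $ k)"
  unfolding psd_def by (metis quad_form_axis)

lemma psd_cauchy_schwarz:
  assumes "psd B"
  shows "(cmod (\<Sum>j\<in>UNIV. B $ k $ j * v $ j))\<^sup>2 \<le> Re (quad_form B v) * Re (B $ k $ k)"
proof -
  define y where "y = (\<Sum>j\<in>UNIV. B $ k $ j * v $ j)"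
  define Y where "Y = (cmod y)\<^sup>2"
  define c where "c = Re (B $ k $ k)"
  define Q where "Q = Re (quad_form B v)"
  have herm: "hermitian B" using assms unfolding psd_def by blast
  have "0 \<le> c" unfolding c_def using assms by (rule psd_diag_nonneg)
  have "0 \<le> Q" unfolding Q_def using assms unfolding psd_def by blast
  have y_cnj: "(\<Sum>i\<in>UNIV. cnj (v $ i) * B $ i $ k) = cnj y"
    unfolding y_def using hermitian_entry[OF herm, of k] by (simp add: mult.commute)
  have Y_Re_Im: "cmod y * cmod y = Re y * Re y + Im y * Im y"
    using cmod_power2[of y] by (simp add: power2_eq_square)
  have "0 \<le> (Y * c) * r\<^sup>2 + (- 2 * Y) * r + Q" for r :: real
  proof -
    define s where "s = - of_real r * y"
    have "0 \<le> Re (quad_form B (v + axis k s))" using assms unfolding psd_def by blast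
    also have "Re (quad_form B (v + axis k s)) = Q - 2 * r * Y + r\<^sup>2 * Y * c"
      unfolding quad_form_add_axis y_cnj y_def[symmetric] s_def Q_def Y_def c_def
      by (subst hermitian_diag_real[OF herm, of k]) (simp add: Y_Re_Im power2_eq_square algebra_simps)
    finally show ?thesis by (simp add: algebra_simps)
  qed
  then have "(- 2 * Y)\<^sup>2 \<le> 4 * (Y * c) * Q"
    by (rule nonneg_quadratic_discriminant[rotated]) (simp add: Y_def \<open>0 \<le> c\<close>)
  then have "Y \<le> Q * c"
    using \<open>0 \<le> c\<close> \<open>0 \<le> Q\<close> unfolding Y_def
    by (cases "y = 0") (auto simp: power2_eq_square mult_ac)
  then show ?thesis unfolding Y_def y_def Q_def c_def .
qed

lemma psd_diag_eq_0_imp_row_eq_0: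
  assumes "psd B" "B $ k $ k = 0"
  shows "B $ k $ j = 0"
proof -
  have "(\<Sum>i\<in>UNIV. B $ k $ i * axis j 1 $ i) = B $ k $ j"
    by (simp add: axis_def if_distrib if_distribR sum.If_cases)
  then show ?thesis
    using psd_cauchy_schwarz[OF assms(1), of k "axis j 1"] assms(2) by simp
qed

definition outer_product :: "complex^'n \<Rightarrow> complex^'n \<Rightarrow> complex^'n^'n" where
  "outer_product u w = (\<chi> i j. u $ i * cnj (w $ j))"

lemma outer_product_entry [simp]: "outer_product u w $ i $ j = u $ i * cnj (w $ j)"
  unfolding outer_product_def by simp

lemma hermitian_outer_product_self: "hermitian (outer_product u u)"
  by (rule hermitianI) simp

lemma quad_form_outer_product_self:
  "quad_form (outer_product u u) v = of_real ((cmod (\<Sum>i\<in>UNIV. cnj (v $ i) * u $ i))\<^sup>2)"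
proof -
  define z where "z = (\<Sum>i\<in>UNIV. cnj (v $ i) * u $ i)"
  have "quad_form (outer_product u u) v = z * cnj z"
    unfolding quad_form_def z_def cnj_sum sum_product by (simp add: mult_ac)
  then show ?thesis unfolding z_def by (simp only: complex_norm_square)
qed

lemma psd_outer_product_self: "psd (outer_product u u)"
  unfolding psd_def quad_form_outer_product_self using hermitian_outer_product_self by simp

lemma trace_mult_outer_product_self: "trace (A ** outer_product u u) = quad_form A u"
  unfolding trace_matrix_mult quad_form_def by (simp add: sum_distrib_left mult_ac)

lemma trace_outer_product_self: "trace (outer_product u u) = of_real ((norm u)\<^sup>2)"
proof -
  have "(norm u)\<^sup>2 = (\<Sum>i\<in>UNIV. (cmod (u $ i))\<^sup>2)"
    unfolding norm_vec_def L2_set_def by (simp add: sum_nonneg)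
  have "trace (outer_product u u) = (\<Sum>i\<in>UNIV. u $ i * cnj (u $ i))"
    unfolding trace_def by simp
  also have "\<dots> = of_real (\<Sum>i\<in>UNIV. (cmod (u $ i))\<^sup>2)"
    by (simp only: complex_norm_square of_real_sum)
  finally show ?thesis using \<open>(norm u)\<^sup>2 = _\<close> by simp
qed

lemma psd_pivot_step:
  assumes "psd B" "B $ k $ k \<noteq> 0"
  defines "u \<equiv> \<chi> j. B $ j $ k / of_real (sqrt (Re (B $ k $ k)))"
  shows "psd (B - outer_product u u)"
    and "{j. (B - outer_product u u) $ j $ j \<noteq> 0} \<subset> {j. B $ j $ j \<noteq> 0}"
proof -
  define c where "c = Re (B $ k $ k)"
  have herm: "hermitian B" using assms(1) unfolding psd_def by blast
  have Bkk: "B $ k $ k = of_real c" unfolding c_def by (rule hermitian_diag_real[OF herm])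
  have "c \<noteq> 0" using assms(2) Bkk by auto
  then have "0 < c" using psd_diag_nonneg[OF assms(1), of k] unfolding c_def by simp
  have uu: "u $ i * cnj (u $ j) = B $ i $ k * cnj (B $ j $ k) / of_real c" for i j
    using \<open>0 < c\<close> unfolding u_def c_def[symmetric]
    by (simp add: power2_eq_square of_real_mult[symmetric] del: of_real_mult)
  show "psd (B - outer_product u u)"
    unfolding psd_def
  proof (intro conjI allI)
    show "hermitian (B - outer_product u u)"
      by (rule hermitian_diff[OF herm hermitian_outer_product_self])
    fix v
    define y where "y = (\<Sum>j\<in>UNIV. B $ k $ j * v $ j)"
    have "(\<Sum>i\<in>UNIV. cnj (v $ i) * u $ i) = cnj y / of_real (sqrt c)"
      unfolding u_def y_def c_def[symmetric] using hermitian_entry[OF herm, of k]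
      by (simp add: sum_divide_distrib mult.commute)
    then have "quad_form (outer_product u u) v = of_real ((cmod y / sqrt c)\<^sup>2)"
      unfolding quad_form_outer_product_self using \<open>0 < c\<close> by (simp add: norm_divide del: of_real_power)
    also have "(cmod y / sqrt c)\<^sup>2 = (cmod y)\<^sup>2 / c"
      using \<open>0 < c\<close> by (simp add: power_divide)
    finally have "quad_form (outer_product u u) v = of_real ((cmod y)\<^sup>2 / c)" .
    moreover have "(cmod y)\<^sup>2 / c \<le> Re (quad_form B v)"
      using psd_cauchy_schwarz[OF assms(1), of k v] \<open>0 < c\<close> unfolding y_def c_def[symmetric]
      by (simp add: divide_le_eq)
    ultimately show "Im (quad_form (B - outer_product u u) v) = 0"
      and "0 \<le> Re (quad_form (B - outer_product u u) v)"
      unfolding quad_form_diff using Im_quad_form_hermitian[OF herm] by simp_all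
  qed
  have "(B - outer_product u u) $ k $ k = 0"
    using \<open>0 < c\<close> by (simp add: uu Bkk)
  moreover have "(B - outer_product u u) $ j $ j = 0" if "B $ j $ j = 0" for j
    using psd_diag_eq_0_imp_row_eq_0[OF assms(1) that, of k] that by (simp add: uu)
  ultimately show "{j. (B - outer_product u u) $ j $ j \<noteq> 0} \<subset> {j. B $ j $ j \<noteq> 0}"
    using assms(2) by blast
qed

lemma psd_eq_sum_outer_products:
  fixes B :: "complex^'n::finite^'n"
  assumes "psd B"
  shows "\<exists>us. B = (\<Sum>u\<leftarrow>us. outer_product u u)"
  using assms
proof (induction "card {j. B $ j $ j \<noteq> 0}" arbitrary: B rule: less_induct)
  case less
  show ?case
  proof (cases "\<exists>k. B $ k $ k \<noteq> 0")
    case False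
    then have "B $ i $ j = 0" for i j
      using psd_diag_eq_0_imp_row_eq_0[OF less.prems] by blast
    then have "B = 0" by (simp add: vec_eq_iff)
    then have "B = (\<Sum>u\<leftarrow>[]. outer_product u u)" by simp
    then show ?thesis by blast
  next
    case True
    then obtain k where "B $ k $ k \<noteq> 0" by blast
    define u where "u = (\<chi> j. B $ j $ k / of_real (sqrt (Re (B $ k $ k))))"
    note step = psd_pivot_step[OF less.prems \<open>B $ k $ k \<noteq> 0\<close>, folded u_def]
    obtain us where "B - outer_product u u = (\<Sum>u\<leftarrow>us. outer_product u u)"
      using less.hyps[OF psubset_card_mono[OF finite step(2)] step(1)] by blast
    then have "B = outer_product u u + (\<Sum>u\<leftarrow>us. outer_product u u)"
      by (metis add.commute diff_add_cancel)
    then have "B = (\<Sum>u\<leftarrow>u # us. outer_product u u)"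
      by simp
    then show ?thesis by blast
  qed
qed

lemma psd_trace_mult_nonneg:
  assumes "psd A" "psd B"
  shows "0 \<le> Re (trace (A ** B))"
proof -
  obtain us where B: "B = (\<Sum>u\<leftarrow>us. outer_product u u)"
    using psd_eq_sum_outer_products[OF assms(2)] by blast
  have "0 \<le> Re (trace (A ** (\<Sum>u\<leftarrow>us. outer_product u u)))"
  proof (induction us)
    case Nil
    then show ?case by (simp add: trace_def)
  next
    case (Cons u us)
    then show ?case
      using assms(1) unfolding psd_def
      by (simp add: matrix_add_ldistrib trace_add trace_mult_outer_product_self)
  qed
  then show ?thesis unfolding B .
qed

lemma conj_mat_entry [simp]: "conj_mat M $ i $ j = cnj (M $ i $ j)"
  unfolding conj_mat_def by simp

lemma hermitian_conj_mat: "hermitian M \<Longrightarrow> hermitian (conj_mat M)"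
  by (rule hermitianI) (simp add: hermitian_entry)

lemma quad_form_conj_mat: "quad_form (conj_mat M) v = cnj (quad_form M (\<chi> i. cnj (v $ i)))"
  unfolding quad_form_def by simp

lemma psd_conj_mat: "psd M \<Longrightarrow> psd (conj_mat M)"
  unfolding psd_def quad_form_conj_mat by (auto simp: hermitian_conj_mat)

lemma trace_conj_mat: "trace (conj_mat M) = cnj (trace M)"
  unfolding trace_def by simp

lemma is_state_conj_mat: "is_state \<rho> \<Longrightarrow> is_state (conj_mat \<rho>)"
  unfolding is_state_def by (simp add: psd_conj_mat trace_conj_mat)

lemma trace_mult_conj_mat: "trace (conj_mat A ** B) = cnj (trace (A ** conj_mat B))"
  unfolding trace_matrix_mult by simp

lemma scaleR_matrix_entry [simp]: "(r *\<^sub>R M) $ i $ j = of_real r * (M :: complex^'n^'k) $ i $ j"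
  unfolding vector_scaleR_component by (simp add: scaleR_conv_of_real)

lemma mix_entry [simp]:
  "mix t M $ i $ j = of_real t * M $ i $ j + of_real (1 - t) * cnj (M $ i $ j)"
  unfolding mix_def vector_add_component scaleR_matrix_entry conj_mat_entry ..

lemma hermitian_mix: "hermitian M \<Longrightarrow> hermitian (mix t M)"
  by (rule hermitianI) (simp add: hermitian_entry)

lemma trace_mix_mult:
  "trace (mix t A ** B) = of_real t * trace (A ** B) + of_real (1 - t) * trace (conj_mat A ** B)"
  unfolding trace_matrix_mult
  by (simp add: distrib_left distrib_right sum.distrib sum_distrib_left mult_ac)

lemma trace_mult_mix:
  "trace (A ** mix t B) = of_real t * trace (A ** B) + of_real (1 - t) * trace (A ** conj_mat B)"
  unfolding trace_matrix_mult
  by (simp add: distrib_left distrib_right sum.distrib sum_distrib_left mult_ac)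

lemma trace_mult_mix_swap:
  assumes "hermitian A" "hermitian B"
  shows "trace (A ** mix t B) = trace (mix t A ** B)"
proof -
  have "Im (trace (A ** conj_mat B)) = 0"
    by (rule Im_trace_mult_hermitian[OF assms(1) hermitian_conj_mat[OF assms(2)]])
  then have "trace (conj_mat A ** B) = trace (A ** conj_mat B)"
    unfolding trace_mult_conj_mat by (simp add: complex_eq_iff)
  then show ?thesis unfolding trace_mix_mult trace_mult_mix by simp
qed

lemma detects_mix_swap:
  "hermitian W \<Longrightarrow> hermitian \<rho> \<Longrightarrow> detects W (mix t \<rho>) \<longleftrightarrow> detects (mix t W) \<rho>"
  unfolding detects_def by (simp add: trace_mult_mix_swap)

lemma separableE:
  fixes \<sigma> :: "complex^('a::finite \<times> 'b::finite)^('a \<times> 'b)"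
  assumes "separable \<sigma>"
  obtains k p and A :: "nat \<Rightarrow> complex^'a^'a" and B :: "nat \<Rightarrow> complex^'b^'b"
  where "\<forall>i<k. 0 \<le> p i \<and> is_state (A i) \<and> is_state (B i)" "(\<Sum>i<k. p i) = 1"
    "\<sigma> = (\<Sum>i<k. p i *\<^sub>R kron (A i) (B i))"
  using assms unfolding separable_def by blast

lemma conj_mat_kron: "conj_mat (kron A B) = kron (conj_mat A) (conj_mat B)"
  unfolding kron_def by (simp add: vec_eq_iff)

lemma conj_mat_sum_scaleR: "conj_mat (\<Sum>i<k. p i *\<^sub>R X i) = (\<Sum>i<k. p i *\<^sub>R conj_mat (X i))"
  by (simp add: vec_eq_iff)

lemma separable_conj_mat:
  fixes \<sigma> :: "complex^('a::finite \<times> 'b::finite)^('a \<times> 'b)"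
  assumes "separable \<sigma>"
  shows "separable (conj_mat \<sigma>)"
proof -
  obtain k p and A :: "nat \<Rightarrow> complex^'a^'a" and B :: "nat \<Rightarrow> complex^'b^'b"
    where states: "\<forall>i<k. 0 \<le> p i \<and> is_state (A i) \<and> is_state (B i)"
      and "(\<Sum>i<k. p i) = 1" and "\<sigma> = (\<Sum>i<k. p i *\<^sub>R kron (A i) (B i))"
    using assms by (rule separableE)
  have "conj_mat \<sigma> = (\<Sum>i<k. p i *\<^sub>R kron (conj_mat (A i)) (conj_mat (B i)))"
    unfolding \<open>\<sigma> = _\<close> conj_mat_sum_scaleR conj_mat_kron ..
  moreover have "\<forall>i<k. 0 \<le> p i \<and> is_state (conj_mat (A i)) \<and> is_state (conj_mat (B i))"
    using states by (simp add: is_state_conj_mat)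
  ultimately show ?thesis
    unfolding separable_def using \<open>(\<Sum>i<k. p i) = 1\<close>
    by (intro exI[of _ k] exI[of _ p] exI[of _ "\<lambda>i. conj_mat (A i)"] exI[of _ "\<lambda>i. conj_mat (B i)"])
      simp
qed

lemma hermitian_kron: "hermitian A \<Longrightarrow> hermitian B \<Longrightarrow> hermitian (kron A B)"
  by (rule hermitianI) (simp add: kron_def hermitian_entry)

lemma hermitian_sum_scaleR:
  "(\<And>i. i < k \<Longrightarrow> hermitian (X i)) \<Longrightarrow> hermitian (\<Sum>i<k. p i *\<^sub>R X i)"
  by (rule hermitianI) (auto intro!: sum.cong simp: hermitian_entry)

lemma separable_hermitian:
  fixes \<sigma> :: "complex^('a::finite \<times> 'b::finite)^('a \<times> 'b)"
  assumes "separable \<sigma>"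
  shows "hermitian \<sigma>"
proof -
  obtain k p and A :: "nat \<Rightarrow> complex^'a^'a" and B :: "nat \<Rightarrow> complex^'b^'b"
    where states: "\<forall>i<k. 0 \<le> p i \<and> is_state (A i) \<and> is_state (B i)"
      and "\<sigma> = (\<Sum>i<k. p i *\<^sub>R kron (A i) (B i))"
    using assms by (rule separableE)
  show ?thesis
    unfolding \<open>\<sigma> = _\<close>
    by (rule hermitian_sum_scaleR, rule hermitian_kron) (use states in \<open>auto simp: is_state_def psd_def\<close>)
qed

lemma witness_mix_nonneg_on_separable:
  assumes "entanglement_witness W" "t \<in> {0..1}" "separable \<sigma>"
  shows "Im (trace (mix t W ** \<sigma>)) = 0 \<and> 0 \<le> Re (trace (mix t W ** \<sigma>))"
proof
  have herm: "hermitian W" using assms(1) unfolding entanglement_witness_def by blast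
  show "Im (trace (mix t W ** \<sigma>)) = 0"
    by (rule Im_trace_mult_hermitian[OF hermitian_mix[OF herm] separable_hermitian[OF assms(3)]])
  have "0 \<le> Re (trace (W ** \<sigma>))" "0 \<le> Re (trace (W ** conj_mat \<sigma>))"
    using assms(1) assms(3) separable_conj_mat[OF assms(3)]
    unfolding entanglement_witness_def by blast+
  then show "0 \<le> Re (trace (mix t W ** \<sigma>))"
    using assms(2) unfolding trace_mix_mult trace_mult_conj_mat by simp
qed

lemma not_psd_imp_negative_quad_form:
  "hermitian M \<Longrightarrow> \<not> psd M \<Longrightarrow> \<exists>v. Re (quad_form M v) < 0"
  unfolding psd_def using Im_quad_form_hermitian by (meson not_le)

lemma ex_state_detects_iff_not_psd:
  assumes "hermitian M"
  shows "(\<exists>\<rho>. is_state \<rho> \<and> detects M \<rho>) \<longleftrightarrow> \<not> psd M"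
proof
  assume "\<exists>\<rho>. is_state \<rho> \<and> detects M \<rho>"
  then show "\<not> psd M"
    using psd_trace_mult_nonneg unfolding is_state_def detects_def by force
next
  assume "\<not> psd M"
  then obtain v where v: "Re (quad_form M v) < 0"
    using not_psd_imp_negative_quad_form[OF assms] by blast
  then have "v \<noteq> 0" by (auto simp: quad_form_def)
  define \<rho> where "\<rho> = outer_product (sgn v) (sgn v)"
  have "is_state \<rho>"
    unfolding is_state_def \<rho>_def trace_outer_product_self
    using psd_outer_product_self \<open>v \<noteq> 0\<close> by (simp add: norm_sgn)
  moreover have "trace (M ** \<rho>) = of_real ((1 / norm v)\<^sup>2) * quad_form M v"
    unfolding \<rho>_def trace_mult_outer_product_self sgn_div_norm
    by (simp add: quad_form_scaleR divide_inverse_commute)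
  then have "detects M \<rho>"
    unfolding detects_def using v \<open>v \<noteq> 0\<close> Im_quad_form_hermitian[OF assms]
    by (simp add: mult_pos_neg)
  ultimately show "\<exists>\<rho>. is_state \<rho> \<and> detects M \<rho>" by blast
qed

lemma entanglement_witness_iff_not_psd:
  fixes W :: "complex^('m::finite \<times> 'n::finite)^('m \<times> 'n)"
  assumes herm: "hermitian W"
    and nonneg: "\<And>\<sigma>. separable \<sigma> \<Longrightarrow> Im (trace (W ** \<sigma>)) = 0 \<and> 0 \<le> Re (trace (W ** \<sigma>))"
  shows "entanglement_witness W \<longleftrightarrow> \<not> psd W"
proof
  assume "entanglement_witness W"
  then have "\<exists>\<rho>. is_state \<rho> \<and> detects W \<rho>"
    unfolding entanglement_witness_def entangled_def by blast
  then show "\<not> psd W" using ex_state_detects_iff_not_psd[OF herm] by blast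
next
  assume "\<not> psd W"
  then obtain \<rho> where "is_state \<rho>" "detects W \<rho>"
    using ex_state_detects_iff_not_psd[OF herm] by blast
  moreover from \<open>detects W \<rho>\<close> have "\<not> separable \<rho>"
    using nonneg unfolding detects_def by force
  ultimately show "entanglement_witness W"
    unfolding entanglement_witness_def entangled_def using herm nonneg by blast
qed

theorem lemma4:
  fixes W :: "complex^('m::finite \<times> 'n::finite)^('m \<times> 'n)"
  assumes "entanglement_witness W"
  shows "(\<forall>t\<in>{0..1}. entanglement_witness (mix t W) \<longleftrightarrow> \<not> psd (mix t W))
       \<and> (\<forall>t\<in>{0..1}. entanglement_witness (mix t W) \<longleftrightarrow>
            (\<exists>\<rho>::complex^('m \<times> 'n)^('m \<times> 'n). is_state \<rho> \<and> detects W (mix t \<rho>)))"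
proof -
  have herm: "hermitian W" using assms unfolding entanglement_witness_def by blast
  have witness_iff: "entanglement_witness (mix t W) \<longleftrightarrow> \<not> psd (mix t W)" if "t \<in> {0..1}" for t
    by (rule entanglement_witness_iff_not_psd[OF hermitian_mix[OF herm]])
      (rule witness_mix_nonneg_on_separable[OF assms that])
  have "(\<exists>\<rho>. is_state \<rho> \<and> detects W (mix t \<rho>)) \<longleftrightarrow> (\<exists>\<rho>. is_state \<rho> \<and> detects (mix t W) \<rho>)"
    for t
    using detects_mix_swap[OF herm] unfolding is_state_def psd_def by blast
  then have "(\<exists>\<rho>. is_state \<rho> \<and> detects W (mix t \<rho>)) \<longleftrightarrow> \<not> psd (mix t W)" for t
    using ex_state_detects_iff_not_psd[OF hermitian_mix[OF herm]] by blast
  with witness_iff show ?thesis by blast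
qed

end
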